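(* Let $V$ be a $2n$-dimensional real vector space and let $\omega,\Omega$ be two symplectic (nondegenerate alternating bilinear) forms on $V$. If the set of Lagrangian subspaces of $V$ with respect to $\omega$ coincides with the set of Lagrangian subspaces with respect to $\Omega$, then there is a constant $c\neq0$ with $\Omega=c\,\omega$.
   Context: A Lagrangian subspace of a $2n$-dimensional symplectic vector space $(V,\omega)$ is an $n$-dimensional subspace on which $\omega$ vanishes identically. *)

theory Defs
  imports "HOL-Analysis.Analysis"
begin

definition symplectic_form :: "('v::euclidean_space \<Rightarrow> 'v \<Rightarrow> real) \<Rightarrow> bool" where
  "symplectic_form w \<longleftrightarrow>
     bilinear w \<and> (\<forall>x. w x x = 0) \<and> (\<forall>x. (\<forall>y. w x y = 0) \<longrightarrow> x = 0)"

definition lagrangian :: "nat \<Rightarrow> ('v::euclidean_space \<Rightarrow> 'v \<Rightarrow> real) \<Rightarrow> 'v set \<Rightarrow> bool" where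
  "lagrangian n w L \<longleftrightarrow> subspace L \<and> dim L = n \<and> (\<forall>x\<in>L. \<forall>y\<in>L. w x y = 0)"

end

theory Submission
  imports Defs
begin

text \<open>Whenever \<open>\<omega> x y = 0\<close>, the span of \<open>x\<close> and \<open>y\<close> is \<open>\<omega>-isotropic\<close> and therefore lies in
an \<open>\<omega>-Lagrangian\<close> subspace: an isotropic \<open>W\<close> of dimension less than \<open>n\<close> is properly contained
in its complement \<open>W\<^sup>\<omega>\<close>, which has dimension \<open>2n - dim W\<close>, and can be enlarged by any vector
of \<open>W\<^sup>\<omega> - W\<close>. That subspace is also \<open>\<Omega>-Lagrangian\<close>, so \<open>\<Omega> x y = 0\<close>. Two bilinear forms
such that the zeros of one are zeros of the other are proportional, since each row and each
column of \<open>\<Omega>\<close> is then a linear functional whose kernel contains that of the corresponding one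
of \<open>\<omega>\<close>.\<close>

definition isotropic :: "('v::real_vector \<Rightarrow> 'v \<Rightarrow> real) \<Rightarrow> 'v set \<Rightarrow> bool" where
  "isotropic w S \<longleftrightarrow> (\<forall>x\<in>S. \<forall>y\<in>S. w x y = 0)"

definition symplectic_complement :: "('v::real_vector \<Rightarrow> 'v \<Rightarrow> real) \<Rightarrow> 'v set \<Rightarrow> 'v set" where
  "symplectic_complement w W = {v. \<forall>u\<in>W. w u v = 0}"

lemma lagrangian_iff_isotropic:
  "lagrangian n w L \<longleftrightarrow> subspace L \<and> dim L = n \<and> isotropic w L"
  by (simp add: lagrangian_def isotropic_def)

lemma alternating_bilinear_skew:
  assumes "bilinear w" "\<And>x. w x x = 0"
  shows "w y x = - w x y"
proof -
  have "w (x + y) (x + y) = w x x + w x y + (w y x + w y y)"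
    by (simp add: bilinear_ladd[OF assms(1)] bilinear_radd[OF assms(1)])
  then have "w x y + w y x = 0" using assms(2) by simp
  then show ?thesis by (simp add: eq_neg_iff_add_eq_0 add.commute)
qed

lemma isotropic_span:
  assumes w: "bilinear w" and iso: "isotropic w S"
  shows "isotropic w (span S)"
proof -
  have left: "subspace {x. w x y = 0}" and right: "subspace {y. w x y = 0}" for x y
    using w by (auto simp: subspace_def bilinear_ladd bilinear_lmul bilinear_lzero
        bilinear_radd bilinear_rmul bilinear_rzero)
  have "w x y = 0" if "x \<in> span S" "y \<in> S" for x y
    using that(1) by (rule span_induct) (use iso that(2) left in \<open>auto simp: isotropic_def\<close>)
  then have "w x y = 0" if "x \<in> span S" "y \<in> span S" for x y
    using that(2) by (rule_tac span_induct[of y S "\<lambda>y. w x y = 0"]) (use that(1) right in auto)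
  then show ?thesis by (simp add: isotropic_def)
qed

lemma bilinear_inner_representation:
  fixes w :: "'v::euclidean_space \<Rightarrow> 'v \<Rightarrow> real"
  assumes "bilinear w"
  obtains g where "linear g" "\<And>u v. w u v = g u \<bullet> v"
proof
  define g where "g u = (\<Sum>b\<in>Basis. w u b *\<^sub>R b)" for u
  show "linear g"
    unfolding g_def using assms
    by (intro linearI) (auto simp: bilinear_ladd bilinear_lmul scaleR_add_left sum.distrib
        scaleR_sum_right)
  show "w u v = g u \<bullet> v" for u v
  proof -
    have "w u v = w u (\<Sum>b\<in>Basis. (v \<bullet> b) *\<^sub>R b)"
      by (simp add: euclidean_representation)
    also have "\<dots> = (\<Sum>b\<in>Basis. (v \<bullet> b) * w u b)"
      using assms by (simp add: bilinear_def real_vector.linear_sum linear_cmul)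
    also have "\<dots> = g u \<bullet> v"
      unfolding g_def by (simp add: inner_sum_right mult.commute inner_commute)
    finally show ?thesis .
  qed
qed

lemma dim_symplectic_complement:
  fixes w :: "'v::euclidean_space \<Rightarrow> 'v \<Rightarrow> real"
  assumes w: "bilinear w" and nondegenerate: "\<And>x. (\<forall>y. w x y = 0) \<Longrightarrow> x = 0"
    and "subspace W"
  shows "dim (symplectic_complement w W) + dim W = DIM('v)"
proof -
  obtain g where g: "linear g" "\<And>u v. w u v = g u \<bullet> v"
    using bilinear_inner_representation[OF w] by blast
  have "inj g"
  proof (rule injI)
    fix x y assume "g x = g y"
    then have "\<forall>v. w (x - y) v = 0" using g by (simp add: linear_diff)
    then show "x = y" using nondegenerate by fastforce
  qed
  then have "dim (g ` W) = dim W"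
    using g(1) by (simp add: eucl.dim_image_eq inj_on_subset)
  moreover have "symplectic_complement w W = {v \<in> UNIV. \<forall>u \<in> g ` W. orthogonal u v}"
    by (auto simp: symplectic_complement_def g orthogonal_def)
  moreover have "dim {v \<in> UNIV. \<forall>u \<in> g ` W. orthogonal u v} + dim (g ` W) = dim (UNIV::'v set)"
    using linear_subspace_image[OF g(1) \<open>subspace W\<close>]
    by (intro dim_subspace_orthogonal_to_vectors) auto
  ultimately show ?thesis by simp
qed

lemma isotropic_subset_symplectic_complement:
  "isotropic w W \<Longrightarrow> W \<subseteq> symplectic_complement w W"
  by (auto simp: isotropic_def symplectic_complement_def)

lemma isotropic_dim_le:
  fixes w :: "'v::euclidean_space \<Rightarrow> 'v \<Rightarrow> real"
  assumes "symplectic_form w" "DIM('v) = 2 * n" "subspace W" "isotropic w W"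
  shows "dim W \<le> n"
proof -
  have "dim W \<le> dim (symplectic_complement w W)"
    using assms(4) by (intro dim_subset isotropic_subset_symplectic_complement)
  moreover have "dim (symplectic_complement w W) + dim W = 2 * n"
    using assms dim_symplectic_complement unfolding symplectic_form_def by metis
  ultimately show ?thesis by linarith
qed

lemma isotropic_insert_symplectic_complement:
  assumes bilinear: "bilinear w" and alternating: "\<And>x. w x x = 0"
    and "isotropic w W" "v \<in> symplectic_complement w W"
  shows "isotropic w (insert v W)"
proof -
  have "w u v = 0" "w v u = 0" if "u \<in> W" for u
    using assms(4) that alternating_bilinear_skew[OF bilinear alternating, of u v]
    by (auto simp: symplectic_complement_def)
  then show ?thesis using assms(3) alternating by (auto simp: isotropic_def)
qed

lemma isotropic_extend_by_one:
  fixes w :: "'v::euclidean_space \<Rightarrow> 'v \<Rightarrow> real"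
  assumes w: "symplectic_form w" and "DIM('v) = 2 * n"
    and W: "subspace W" "isotropic w W" and "dim W < n"
  obtains W' where "subspace W'" "isotropic w W'" "W \<subseteq> W'" "dim W' = dim W + 1"
proof -
  from w have bilinear: "bilinear w" and alternating: "\<And>x. w x x = 0"
    and nondegenerate: "\<And>x. (\<forall>y. w x y = 0) \<Longrightarrow> x = 0"
    unfolding symplectic_form_def by auto
  have "dim (symplectic_complement w W) + dim W = 2 * n"
    using dim_symplectic_complement[of w W] bilinear nondegenerate W(1) assms(2) by simp
  with \<open>dim W < n\<close> have "dim W < dim (symplectic_complement w W)"
    by linarith
  then obtain v where v: "v \<in> symplectic_complement w W" "v \<notin> W"
    by (meson dim_subset subsetI not_le)
  have "isotropic w (span (insert v W))"
    using isotropic_span isotropic_insert_symplectic_complement bilinear alternating W(2) v(1)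
    by blast
  moreover have "v \<notin> span W" using v(2) W(1) span_eq_iff by blast
  ultimately show thesis
    by (intro that[of "span (insert v W)"]) (auto simp: dim_insert intro: span_base)
qed

lemma isotropic_subset_lagrangian:
  fixes w :: "'v::euclidean_space \<Rightarrow> 'v \<Rightarrow> real"
  assumes w: "symplectic_form w" and dim_space: "DIM('v) = 2 * n"
  shows "subspace W \<Longrightarrow> isotropic w W \<Longrightarrow> \<exists>L. lagrangian n w L \<and> W \<subseteq> L"
proof (induction "n - dim W" arbitrary: W rule: less_induct)
  case (less W)
  show ?case
  proof (cases "dim W < n")
    case True
    then obtain W' where W': "subspace W'" "isotropic w W'" "W \<subseteq> W'" "dim W' = dim W + 1"
      using isotropic_extend_by_one[OF w dim_space less.prems] by blast
    with True have "n - dim W' < n - dim W" by simp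
    with W' show ?thesis using less.hyps by blast
  next
    case False
    with isotropic_dim_le[OF w dim_space less.prems] have "dim W = n" by simp
    then show ?thesis using less.prems by (auto simp: lagrangian_iff_isotropic)
  qed
qed

lemma isotropic_pair_in_lagrangian:
  fixes w :: "'v::euclidean_space \<Rightarrow> 'v \<Rightarrow> real"
  assumes w: "symplectic_form w" and "DIM('v) = 2 * n" and "w x y = 0"
  obtains L where "lagrangian n w L" "x \<in> L" "y \<in> L"
proof -
  from w have bilinear: "bilinear w" and alternating: "\<And>x. w x x = 0"
    unfolding symplectic_form_def by auto
  have "isotropic w {x, y}"
    using \<open>w x y = 0\<close> alternating alternating_bilinear_skew[OF bilinear alternating, of x y]
    by (auto simp: isotropic_def)
  then have "isotropic w (span {x, y})" using bilinear isotropic_span by blast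
  then obtain L where "lagrangian n w L" "span {x, y} \<subseteq> L"
    using isotropic_subset_lagrangian[OF assms(1,2)] by blast
  then show thesis using that by (auto intro: span_base)
qed

lemma linear_functional_proportional:
  fixes \<phi> \<psi> :: "'a::real_vector \<Rightarrow> real"
  assumes "linear \<phi>" "linear \<psi>" "\<phi> b \<noteq> 0" "\<And>y. \<phi> y = 0 \<Longrightarrow> \<psi> y = 0"
  shows "\<psi> y = \<psi> b / \<phi> b * \<phi> y"
proof -
  have "\<phi> (\<phi> b *\<^sub>R y - \<phi> y *\<^sub>R b) = 0"
    using assms(1) by (simp add: linear_diff linear_scale)
  then have "\<psi> (\<phi> b *\<^sub>R y - \<phi> y *\<^sub>R b) = 0" by (rule assms(4))
  then show ?thesis
    using assms(2,3) by (simp add: linear_diff linear_scale field_simps)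
qed

lemma bilinear_proportional:
  fixes \<omega> \<Omega> :: "'a::real_vector \<Rightarrow> 'a \<Rightarrow> real"
  assumes \<omega>: "bilinear \<omega>" and \<Omega>: "bilinear \<Omega>" and "\<omega> e f \<noteq> 0"
    and same_zeros: "\<And>x y. \<omega> x y = 0 \<Longrightarrow> \<Omega> x y = 0"
  obtains c where "\<And>x y. \<Omega> x y = c * \<omega> x y"
proof
  define c where "c = \<Omega> e f / \<omega> e f"
  have row: "\<Omega> a y = \<Omega> a b / \<omega> a b * \<omega> a y" if "\<omega> a b \<noteq> 0" for a b y
    using \<omega> \<Omega> that same_zeros by (intro linear_functional_proportional) (auto simp: bilinear_def)
  have column: "\<Omega> x b = \<Omega> a b / \<omega> a b * \<omega> x b" if "\<omega> a b \<noteq> 0" for a b x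
    using \<omega> \<Omega> that same_zeros
    by (intro linear_functional_proportional[where \<phi> = "\<lambda>x. \<omega> x b" and \<psi> = "\<lambda>x. \<Omega> x b"])
      (auto simp: bilinear_def)
  have regular: "\<Omega> a y = c * \<omega> a y" if "\<omega> a f \<noteq> 0" for a y
    using row[OF that, of y] column[OF \<open>\<omega> e f \<noteq> 0\<close>, of a] that by (simp add: c_def)
  show "\<Omega> x y = c * \<omega> x y" for x y
  proof (cases "\<omega> x f = 0")
    case True
    then have "\<omega> (x + e) f \<noteq> 0" using \<open>\<omega> e f \<noteq> 0\<close> by (simp add: bilinear_ladd[OF \<omega>])
    from regular[OF this, of y] regular[OF \<open>\<omega> e f \<noteq> 0\<close>, of y] show ?thesis
      by (simp add: bilinear_ladd[OF \<omega>] bilinear_ladd[OF \<Omega>] algebra_simps)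
  qed (rule regular)
qed

lemma symplectic_form_nonzero:
  fixes w :: "'v::euclidean_space \<Rightarrow> 'v \<Rightarrow> real"
  assumes "symplectic_form w"
  obtains x y where "w x y \<noteq> 0"
proof -
  obtain e :: 'v where "e \<in> Basis" using nonempty_Basis by blast
  then have "e \<noteq> 0" by auto
  then show thesis using assms that unfolding symplectic_form_def by blast
qed

theorem mainTheorem5:
  fixes \<omega> \<Omega> :: "'v::euclidean_space \<Rightarrow> 'v \<Rightarrow> real" and n :: nat
  assumes "DIM('v) = 2 * n"
    and "symplectic_form \<omega>" and "symplectic_form \<Omega>"
    and "{L. lagrangian n \<omega> L} = {L. lagrangian n \<Omega> L}"
  shows "\<exists>c::real. c \<noteq> 0 \<and> (\<forall>x y. \<Omega> x y = c * \<omega> x y)"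
proof -
  have same_zeros: "\<Omega> x y = 0" if zero: "\<omega> x y = 0" for x y
  proof -
    obtain L where "lagrangian n \<omega> L" "x \<in> L" "y \<in> L"
      using isotropic_pair_in_lagrangian[OF assms(2,1) zero] .
    then show ?thesis using assms(4) by (auto simp: lagrangian_iff_isotropic isotropic_def)
  qed
  obtain e f where "\<omega> e f \<noteq> 0" using symplectic_form_nonzero[OF assms(2)] .
  then obtain c where c: "\<And>x y. \<Omega> x y = c * \<omega> x y"
    using bilinear_proportional assms(2,3) same_zeros unfolding symplectic_form_def by metis
  moreover have "c \<noteq> 0"
    using c symplectic_form_nonzero[OF assms(3)] by (metis mult_zero_left)
  ultimately show ?thesis by blast
qed

end
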